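(* Let $M_P$ be the Pappus configuration on $[9]$ with lines $\{1,2,3\},\{1,6,8\},\{7,8,9\},\{2,6,9\},\{2,4,7\},\{3,5,9\},\{3,4,8\},\{1,5,7\},\{4,5,6\}$. Let $i,j\in[9]$ be two distinct points that do not lie on a common line of $M_P$ (equivalently, $\{i,j\}$ is contained in one of $\{1,4,9\},\{2,5,8\},\{3,6,7\}$), and let $k$ be the third element of that triple. Let $F_{ij}$ be the matroid obtained from $M_P$ by making $i$ and $j$ loops (so its remaining lines are three lines concurrent at $k$, and $k$ is its unique point of degree three), and let $F'_{ij}$ be obtained from $M_P$ by making $i,j,k$ loops. Then \[ V_{\mathcal{C}(F_{ij})}=V_{F_{ij}}\cup V_{F'_{ij}}. \]
   Context: A point-line configuration is a simple matroid of rank $\le3$; its lines are the maximal subsets of size $\ge3$ and rank $2$; the degree of a point is the number of lines containing it. For a matroid $K$ on $[d]$ and $S\subseteq[d]$, the matroid obtained by making the points of $S$ loops has circuits $\mathcal{C}(K\setminus S)\cup\{\{s\}:s\in S\}$, where $K\setminus S$ is the restriction of $K$ to $[d]\setminus S$. For a matroid $K$ on $[d]$ of rank $\le3$: a realization is $\gamma\in(\mathbb{C}^3)^d$ such that for all $S\subseteq[d]$, $(\gamma_s)_{s\in S}$ is linearly dependent iff $S$ is dependent in $K$; $V_K$ is the Zariski closure in $\mathbb{C}^{3d}$ of the realizations; $V_{\mathcal{C}(K)}$ is the set of $\gamma\in(\mathbb{C}^3)^d$ with $(\gamma_s)_{s\in S}$ linearly dependent for every dependent $S$ of $K$. *)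

theory Defs
  imports "HOL-Analysis.Analysis"
begin

text \<open>Point-line configurations are encoded as matroids on the ground set [d] = {1..d}
  (points are natural numbers), given by their set of circuits.\<close>

type_synonym circuits = "nat set set"

definition dependent_in :: "circuits \<Rightarrow> nat set \<Rightarrow> bool" where
  "dependent_in C S \<longleftrightarrow> (\<exists>c\<in>C. c \<subseteq> S)"

text \<open>Circuits of the simple rank-3 matroid on {1..d} whose lines (all of size 3) are given:
  the lines themselves, and the 4-subsets containing no line.\<close>
definition line_circuits :: "nat \<Rightarrow> nat set set \<Rightarrow> circuits" where
  "line_circuits d L = {c. c \<subseteq> {1..d} \<and>
      (c \<in> L \<or> (card c = 4 \<and> \<not> (\<exists>l\<in>L. l \<subseteq> c)))}"

definition pappus_lines :: "nat set set" where
  "pappus_lines = {{1,2,3},{1,6,8},{7,8,9},{2,6,9},{2,4,7},{3,5,9},{3,4,8},{1,5,7},{4,5,6}}"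

definition M_P :: circuits where
  "M_P = line_circuits 9 pappus_lines"

definition make_loops :: "circuits \<Rightarrow> nat set \<Rightarrow> circuits" where
  "make_loops K S = {c \<in> K. c \<inter> S = {}} \<union> {{s} | s. s \<in> S}"

text \<open>Configurations (C^3)^d, encoded as maps nat => complex^3 that vanish outside {1..d}.\<close>
definition cfg_space :: "nat \<Rightarrow> (nat \<Rightarrow> complex^3) set" where
  "cfg_space d = {\<gamma>. \<forall>n. n \<notin> {1..d} \<longrightarrow> \<gamma> n = 0}"

definition lin_dep_family :: "(nat \<Rightarrow> complex^3) \<Rightarrow> nat set \<Rightarrow> bool" where
  "lin_dep_family \<gamma> S \<longleftrightarrow>
     (\<exists>c::nat \<Rightarrow> complex. (\<exists>s\<in>S. c s \<noteq> 0) \<and> (\<Sum>s\<in>S. c s *s \<gamma> s) = 0)"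

inductive_set poly_funs :: "((nat \<Rightarrow> complex^3) \<Rightarrow> complex) set" where
  const: "(\<lambda>_. a) \<in> poly_funs"
| coord: "(\<lambda>\<gamma>. \<gamma> n $ k) \<in> poly_funs"
| add: "p \<in> poly_funs \<Longrightarrow> q \<in> poly_funs \<Longrightarrow> (\<lambda>\<gamma>. p \<gamma> + q \<gamma>) \<in> poly_funs"
| mult: "p \<in> poly_funs \<Longrightarrow> q \<in> poly_funs \<Longrightarrow> (\<lambda>\<gamma>. p \<gamma> * q \<gamma>) \<in> poly_funs"

definition zariski_closure :: "nat \<Rightarrow> (nat \<Rightarrow> complex^3) set \<Rightarrow> (nat \<Rightarrow> complex^3) set" where
  "zariski_closure d A = {\<gamma> \<in> cfg_space d.
      \<forall>p\<in>poly_funs. (\<forall>a\<in>A. p a = 0) \<longrightarrow> p \<gamma> = 0}"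

definition realizations :: "nat \<Rightarrow> circuits \<Rightarrow> (nat \<Rightarrow> complex^3) set" where
  "realizations d K = {\<gamma> \<in> cfg_space d.
      \<forall>S. S \<subseteq> {1..d} \<longrightarrow> (lin_dep_family \<gamma> S \<longleftrightarrow> dependent_in K S)}"

definition V_matroid :: "nat \<Rightarrow> circuits \<Rightarrow> (nat \<Rightarrow> complex^3) set" where
  "V_matroid d K = zariski_closure d (realizations d K)"

definition V_circuit :: "nat \<Rightarrow> circuits \<Rightarrow> (nat \<Rightarrow> complex^3) set" where
  "V_circuit d K = {\<gamma> \<in> cfg_space d.
      \<forall>S. S \<subseteq> {1..d} \<longrightarrow> dependent_in K S \<longrightarrow> lin_dep_family \<gamma> S}"

end

(* The circuit variety of F_ij consists of the configurations with loops at i and j whose three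
   lines through k are dependent; it contains V_F and V_F' because these conditions are polynomial.
   Conversely, take such a configuration gamma. If gamma_k is nonzero, each point on the m-th line
   is a combination of gamma_k and a second vector h_m; moving gamma_k, the h_m and these coordinates
   linearly to an explicit realization of F_ij gives a polynomial curve along which the three lines
   stay dependent, while the determinant of every other triple is a polynomial in t that is nonzero
   at t = 1. Hence the curve consists of realizations for all but finitely many t, and gamma, its
   value at t = 0, lies in the Zariski closure V_F. If gamma_k = 0, no line of F'_ij survives and
   the straight segment to a realization of F'_ij (six points in general position) shows that gamma
   lies in V_F'. *)

theory Submission
  imports Defs "HOL-Computational_Algebra.Polynomial"
begin

section \<open>Linear dependence in complex 3-space\<close>

definition det3 :: "complex^3 \<Rightarrow> complex^3 \<Rightarrow> complex^3 \<Rightarrow> complex" where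
  "det3 u v w = u$1*(v$2*w$3 - v$3*w$2) - u$2*(v$1*w$3 - v$3*w$1) + u$3*(v$1*w$2 - v$2*w$1)"

definition cross_product :: "complex^3 \<Rightarrow> complex^3 \<Rightarrow> complex^3" where
  "cross_product a b = vector [a$2*b$3 - a$3*b$2, a$3*b$1 - a$1*b$3, a$1*b$2 - a$2*b$1]"

lemma vec3_eq_iff: "(x::complex^3) = y \<longleftrightarrow> x$1 = y$1 \<and> x$2 = y$2 \<and> x$3 = y$3"
  by (simp add: vec_eq_iff forall_3)

lemma cofactor_identity:
  "cross_product b c $ r *s a + cross_product c a $ r *s b + cross_product a b $ r *s c =
    det3 a b c *s axis r 1"
  using exhaust_3[of r]
  by (elim disjE) (simp_all add: vec3_eq_iff cross_product_def det3_def axis_def algebra_simps)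

lemma cross_product_eq_0_parallel: "cross_product a b = 0 \<Longrightarrow> b$r *s a - a$r *s b = 0"
  using exhaust_3[of r] by (elim disjE) (simp_all add: vec3_eq_iff cross_product_def algebra_simps)

lemma det3_eq_0_imp_dependent:
  assumes "det3 a b c = 0"
  shows "\<exists>x y z. (x \<noteq> 0 \<or> y \<noteq> 0 \<or> z \<noteq> 0) \<and> x *s a + y *s b + z *s c = 0"
proof (cases "cross_product b c = 0 \<and> cross_product c a = 0 \<and> cross_product a b = 0")
  case False
  then obtain r where
    "cross_product b c $ r \<noteq> 0 \<or> cross_product c a $ r \<noteq> 0 \<or> cross_product a b $ r \<noteq> 0"
    by (auto simp: vec_eq_iff)
  then show ?thesis
    using cofactor_identity[of b c r a] assms by auto
next
  case True
  show ?thesis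
  proof (cases "a = 0")
    case True
    then show ?thesis by (intro exI[of _ 1] exI[of _ 0]) simp
  next
    case False
    then obtain r where "a$r \<noteq> 0" by (auto simp: vec_eq_iff)
    with cross_product_eq_0_parallel[of a b r] True show ?thesis
      by (intro exI[of _ "b$r"] exI[of _ "- a$r"] exI[of _ 0]) auto
  qed
qed

lemma lin_dep_family_mono:
  assumes "lin_dep_family \<gamma> S" "S \<subseteq> S'" "finite S'"
  shows "lin_dep_family \<gamma> S'"
proof -
  obtain c where c: "\<exists>s\<in>S. c s \<noteq> 0" "(\<Sum>s\<in>S. c s *s \<gamma> s) = 0"
    using assms(1) unfolding lin_dep_family_def by blast
  define c' where "c' s = (if s \<in> S then c s else 0)" for s
  have "(\<Sum>s\<in>S'. c' s *s \<gamma> s) = (\<Sum>s\<in>S. c s *s \<gamma> s)"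
    using assms(2,3) by (intro sum.mono_neutral_cong_right) (auto simp: c'_def)
  with c assms(2) show ?thesis
    unfolding lin_dep_family_def by (intro exI[of _ c']) (auto simp: c'_def)
qed

lemma lin_dep_family_singleton: "lin_dep_family \<gamma> {s} \<longleftrightarrow> \<gamma> s = 0"
  unfolding lin_dep_family_def by (auto simp: vec_eq_iff intro: exI[of _ "\<lambda>_. 1"])

lemma lin_dep_family_if_zero: "s \<in> S \<Longrightarrow> \<gamma> s = 0 \<Longrightarrow> finite S \<Longrightarrow> lin_dep_family \<gamma> S"
  by (rule lin_dep_family_mono[of _ "{s}"]) (auto simp: lin_dep_family_singleton)

lemma dependent_imp_det3_eq_0:
  assumes "x *s a + y *s b + z *s c = 0" "x \<noteq> 0 \<or> y \<noteq> 0 \<or> z \<noteq> 0"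
  shows "det3 a b c = 0"
proof -
  have "x * det3 a b c = 0" "y * det3 a b c = 0" "z * det3 a b c = 0"
    using assms(1) unfolding vec3_eq_iff det3_def by (simp_all; algebra)+
  with assms(2) show ?thesis by auto
qed

lemma lin_dep_family_triple_iff:
  assumes "a \<noteq> b" "a \<noteq> c" "b \<noteq> c"
  shows "lin_dep_family \<gamma> {a, b, c} \<longleftrightarrow> det3 (\<gamma> a) (\<gamma> b) (\<gamma> c) = 0"
proof
  assume "lin_dep_family \<gamma> {a, b, c}"
  then obtain f where "\<exists>s\<in>{a, b, c}. f s \<noteq> 0" "f a *s \<gamma> a + f b *s \<gamma> b + f c *s \<gamma> c = 0"
    using assms unfolding lin_dep_family_def by (auto simp: add.assoc)
  then show "det3 (\<gamma> a) (\<gamma> b) (\<gamma> c) = 0"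
    by (intro dependent_imp_det3_eq_0) auto
next
  assume "det3 (\<gamma> a) (\<gamma> b) (\<gamma> c) = 0"
  then obtain x y z where xyz: "x \<noteq> 0 \<or> y \<noteq> 0 \<or> z \<noteq> 0" "x *s \<gamma> a + y *s \<gamma> b + z *s \<gamma> c = 0"
    using det3_eq_0_imp_dependent by blast
  define f where "f s = (if s = a then x else if s = b then y else z)" for s
  from xyz assms show "lin_dep_family \<gamma> {a, b, c}"
    unfolding lin_dep_family_def by (intro exI[of _ f]) (auto simp: f_def add.assoc)
qed

lemma cramer_identity:
  "det3 a b c *s d = det3 d b c *s a + det3 a d c *s b + det3 a b d *s c"
  unfolding vec3_eq_iff det3_def by (simp add: algebra_simps)

lemma lin_dep_family_four:
  assumes "distinct [a, b, c, d]"
  shows "lin_dep_family \<gamma> {a, b, c, d}"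
proof (cases "det3 (\<gamma> a) (\<gamma> b) (\<gamma> c) = 0")
  case True
  then show ?thesis
    using assms lin_dep_family_triple_iff[of a b c \<gamma>] by (auto intro: lin_dep_family_mono)
next
  case False
  define f where "f s = (if s = a then det3 (\<gamma> d) (\<gamma> b) (\<gamma> c)
      else if s = b then det3 (\<gamma> a) (\<gamma> d) (\<gamma> c)
      else if s = c then det3 (\<gamma> a) (\<gamma> b) (\<gamma> d) else - det3 (\<gamma> a) (\<gamma> b) (\<gamma> c))" for s
  have "(\<Sum>s\<in>{a, b, c, d}. f s *s \<gamma> s) = f a *s \<gamma> a + f b *s \<gamma> b + f c *s \<gamma> c + f d *s \<gamma> d"
    using assms by (simp add: add.assoc)
  also have "\<dots> = 0"
    using assms cramer_identity[of "\<gamma> a" "\<gamma> b" "\<gamma> c" "\<gamma> d"] by (simp add: f_def)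
  finally show ?thesis
    using False assms unfolding lin_dep_family_def
    by (intro exI[of _ f] conjI bexI[of _ d]) (auto simp: f_def)
qed

lemma lin_dep_family_card_ge_4:
  assumes "finite S" "4 \<le> card S"
  shows "lin_dep_family \<gamma> S"
proof -
  obtain T where "T \<subseteq> S" "card T = 4"
    using assms(2) obtain_subset_with_card_n by metis
  then obtain a b c d where "T = {a, b, c, d}" "distinct [a, b, c, d]"
    by (auto simp: numeral_eq_Suc card_Suc_eq)
  then show ?thesis
    using lin_dep_family_four lin_dep_family_mono \<open>T \<subseteq> S\<close> assms(1) by metis
qed

lemma det3_eq_0_imp_span2:
  assumes "det3 c a b = 0" "c \<noteq> 0"
  shows "\<exists>h x y x' y'. a = x *s c + y *s h \<and> b = x' *s c + y' *s h"
proof -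
  obtain X Y Z where XYZ: "X \<noteq> 0 \<or> Y \<noteq> 0 \<or> Z \<noteq> 0" "X *s c + Y *s a + Z *s b = 0"
    using det3_eq_0_imp_dependent[OF assms(1)] by blast
  have comp: "X * c$i + Y * a$i + Z * b$i = 0" for i
    using XYZ(2) by (simp add: vec_eq_iff)
  consider "Z \<noteq> 0" | "Z = 0" "Y \<noteq> 0"
    using XYZ comp assms(2) by (cases "Z = 0"; cases "Y = 0") (auto simp: vec_eq_iff)
  then show ?thesis
  proof cases
    case 1
    have "b$i = (- X / Z) * c$i + (- Y / Z) * a$i" for i
      using 1 comp[of i] by (simp add: field_simps) algebra
    then have "b = (- X / Z) *s c + (- Y / Z) *s a" by (simp add: vec_eq_iff)
    moreover have "a = 0 *s c + 1 *s a" by simp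
    ultimately show ?thesis by blast
  next
    case 2
    have "a$i = (- X / Y) * c$i" for i
      using 2 comp[of i] by (simp add: field_simps) algebra
    then have "a = (- X / Y) *s c + 0 *s b" by (simp add: vec_eq_iff)
    moreover have "b = 0 *s c + 1 *s b" by simp
    ultimately show ?thesis by blast
  qed
qed

lemma det3_span2: "det3 c (x *s c + y *s h) (x' *s c + y' *s h) = 0"
  unfolding det3_def by (simp add: algebra_simps)

lemma det3_swap:
  "det3 b a c = - det3 a b c" "det3 a c b = - det3 a b c" "det3 c b a = - det3 a b c"
  unfolding det3_def by (simp_all add: algebra_simps)

lemma det3_rotate: "det3 b c a = det3 a b c"
  unfolding det3_def by (simp add: algebra_simps)

lemma det3_nonzero_if_sorted:
  fixes p q r :: nat
  assumes sorted: "\<And>p q r. p < q \<Longrightarrow> q < r \<Longrightarrow> r < m \<Longrightarrow> P {p, q, r} \<Longrightarrow>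
      det3 (W p) (W q) (W r) \<noteq> 0"
    and "p < m" "q < m" "r < m" "distinct [p, q, r]" "P {p, q, r}"
  shows "det3 (W p) (W q) (W r) \<noteq> 0"
proof -
  consider "p < q" "q < r" | "p < r" "r < q" | "q < p" "p < r"
    | "q < r" "r < p" | "r < p" "p < q" | "r < q" "q < p"
    using assms(5) by (auto simp: linorder_neq_iff)
  then show ?thesis
  proof cases
    case 1
    then show ?thesis using assms sorted[of p q r] by simp
  next
    case 2
    then show ?thesis
      using assms sorted[of p r q] det3_swap(2)[of "W p" "W q" "W r"] by (simp add: insert_commute)
  next
    case 3
    then show ?thesis
      using assms sorted[of q p r] det3_swap(1)[of "W p" "W q" "W r"] by (simp add: insert_commute)
  next
    case 4
    then show ?thesis
      using assms sorted[of q r p] det3_rotate[of "W q" "W r" "W p"] by (simp add: insert_commute)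
  next
    case 5
    then show ?thesis
      using assms sorted[of r p q] det3_rotate[of "W p" "W q" "W r"] by (simp add: insert_commute)
  next
    case 6
    then show ?thesis
      using assms sorted[of r q p] det3_swap(3)[of "W p" "W q" "W r"] by (simp add: insert_commute)
  qed
qed

section \<open>Polynomial curves and the Zariski closure\<close>

lemma poly_funs_diff: "p \<in> poly_funs \<Longrightarrow> q \<in> poly_funs \<Longrightarrow> (\<lambda>\<gamma>. p \<gamma> - q \<gamma>) \<in> poly_funs"
  using poly_funs.add[OF _ poly_funs.mult[OF poly_funs.const[of "-1"]], of p q] by simp

lemma poly_funs_det3: "(\<lambda>\<gamma>. det3 (\<gamma> a) (\<gamma> b) (\<gamma> c)) \<in> poly_funs"
  unfolding det3_def by (intro poly_funs_diff poly_funs.add poly_funs.mult poly_funs.coord)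

definition poly_function :: "(complex \<Rightarrow> complex) \<Rightarrow> bool" where
  "poly_function f \<longleftrightarrow> (\<exists>Q. \<forall>t. f t = poly Q t)"

lemma poly_function_const: "poly_function (\<lambda>t. a)"
  unfolding poly_function_def by (auto intro!: exI[of _ "[:a:]"])

lemma poly_function_ident: "poly_function (\<lambda>t. t)"
  unfolding poly_function_def by (auto intro!: exI[of _ "[:0, 1:]"])

lemma poly_function_add: "poly_function f \<Longrightarrow> poly_function g \<Longrightarrow> poly_function (\<lambda>t. f t + g t)"
  unfolding poly_function_def by (metis poly_add)

lemma poly_function_mult: "poly_function f \<Longrightarrow> poly_function g \<Longrightarrow> poly_function (\<lambda>t. f t * g t)"
  unfolding poly_function_def by (metis poly_mult)

lemma poly_function_diff: "poly_function f \<Longrightarrow> poly_function g \<Longrightarrow> poly_function (\<lambda>t. f t - g t)"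
  unfolding poly_function_def by (metis poly_diff)

definition poly_vec_function :: "(complex \<Rightarrow> complex^3) \<Rightarrow> bool" where
  "poly_vec_function F \<longleftrightarrow> (\<forall>r. poly_function (\<lambda>t. F t $ r))"

lemma poly_vec_function_const: "poly_vec_function (\<lambda>t. v)"
  unfolding poly_vec_function_def by (simp add: poly_function_const)

lemma poly_vec_function_add:
  "poly_vec_function F \<Longrightarrow> poly_vec_function G \<Longrightarrow> poly_vec_function (\<lambda>t. F t + G t)"
  unfolding poly_vec_function_def by (simp add: poly_function_add)

lemma poly_vec_function_scale:
  "poly_function f \<Longrightarrow> poly_vec_function F \<Longrightarrow> poly_vec_function (\<lambda>t. f t *s F t)"
  unfolding poly_vec_function_def by (simp add: poly_function_mult)

definition poly_curve :: "(complex \<Rightarrow> 'a \<Rightarrow> complex^3) \<Rightarrow> bool" where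
  "poly_curve g \<longleftrightarrow> (\<forall>n. poly_vec_function (\<lambda>t. g t n))"

lemma poly_function_along_poly_curve:
  assumes "p \<in> poly_funs" "poly_curve g"
  shows "poly_function (\<lambda>t. p (g t))"
  using assms(1)
proof induction
  case (coord n k)
  then show ?case using assms(2) unfolding poly_curve_def poly_vec_function_def by blast
qed (auto intro: poly_function_const poly_function_add poly_function_mult)

lemma poly_function_eventually_nonzero:
  assumes "poly_function f" "f t\<^sub>0 \<noteq> 0"
  shows "\<forall>\<^sub>F t in cofinite. f t \<noteq> 0"
proof -
  obtain Q where Q: "\<And>t. f t = poly Q t" using assms(1) unfolding poly_function_def by blast
  with assms(2) have "Q \<noteq> 0" by auto
  then show ?thesis using poly_roots_finite unfolding Q eventually_cofinite by simp
qed

lemma zariski_closure_by_curve: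
  assumes "poly_curve g" "g 0 \<in> cfg_space d" "\<forall>\<^sub>F t in cofinite. g t \<in> A"
  shows "g 0 \<in> zariski_closure d A"
  unfolding zariski_closure_def
proof (intro CollectI conjI ballI impI assms(2))
  fix p assume p: "p \<in> poly_funs" "\<forall>a\<in>A. p a = 0"
  show "p (g 0) = 0"
  proof (rule ccontr)
    assume "p (g 0) \<noteq> 0"
    with p(1) assms(1) have "\<forall>\<^sub>F t in cofinite. p (g t) \<noteq> 0"
      by (intro poly_function_eventually_nonzero[where t\<^sub>0 = 0] poly_function_along_poly_curve)
    from eventually_conj[OF this assms(3)] have "\<forall>\<^sub>F t::complex in cofinite. False"
      by (rule eventually_mono) (use p(2) in blast)
    then show False by (simp add: eventually_cofinite infinite_UNIV_char_0)
  qed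
qed

section \<open>An explicit realization of three concurrent lines\<close>

(* The centre is star_point 0; the m-th line through it (m < 3) carries star_point (2m + 1) and
   star_point (2m + 2). *)
definition star_centre :: "complex^3" where
  "star_centre = vector [0, 0, 1]"

definition star_direction :: "nat \<Rightarrow> complex^3" where
  "star_direction m = (if m = 0 then vector [-2, -2, -2]
     else if m = 1 then vector [-2, -1, -2] else vector [-2, 0, 1])"

definition star_point :: "nat \<Rightarrow> complex^3" where
  "star_point q = (if q = 0 then star_centre
     else of_bool (even q) *s star_centre + star_direction ((q - 1) div 2))"

definition star_lines :: "nat set set" where
  "star_lines = {{0, 1, 2}, {0, 3, 4}, {0, 5, 6}}"

lemma star_lines_iff: "R \<in> star_lines \<longleftrightarrow> (\<exists>m<3. R = {0, 2 * m + 1, 2 * m + 2})"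
proof
  assume "R \<in> star_lines"
  then show "\<exists>m<3. R = {0, 2 * m + 1, 2 * m + 2}"
    unfolding star_lines_def by (elim insertE) (auto intro: exI[of _ 0] exI[of _ 1] exI[of _ 2])
next
  assume "\<exists>m<3. R = {0, 2 * m + 1, 2 * m + 2}"
  then obtain m where "m < 3" "R = {0, 2 * m + 1, 2 * m + 2}" by blast
  moreover have "m = 0 \<or> m = 1 \<or> m = 2" using \<open>m < 3\<close> by auto
  ultimately show "R \<in> star_lines" unfolding star_lines_def by auto
qed

lemma star_point_generic_sorted:
  assumes "p < q" "q < r" "r < 7" "\<not> (p = 0 \<and> odd q \<and> r = q + 1)"
  shows "det3 (star_point p) (star_point q) (star_point r) \<noteq> 0"
proof -
  have "r = 2 \<or> r = 3 \<or> r = 4 \<or> r = 5 \<or> r = 6" "q = 1 \<or> q = 2 \<or> q = 3 \<or> q = 4 \<or> q = 5"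
    "p = 0 \<or> p = 1 \<or> p = 2 \<or> p = 3 \<or> p = 4" using assms(1-3) by auto
  then show ?thesis
    using assms
    by (elim disjE) (simp_all add: star_point_def star_centre_def star_direction_def det3_def)
qed

lemma star_point_generic:
  assumes "p < 7" "q < 7" "r < 7" "distinct [p, q, r]" "{p, q, r} \<notin> star_lines"
  shows "det3 (star_point p) (star_point q) (star_point r) \<noteq> 0"
proof (rule det3_nonzero_if_sorted[where P = "\<lambda>T. T \<notin> star_lines"])
  fix p q r :: nat assume "p < q" "q < r" "r < 7" "{p, q, r} \<notin> star_lines"
  moreover have "{0, q, q + 1} \<in> star_lines" if "odd q" "q + 1 < 7"
  proof -
    obtain m where "q = 2 * m + 1" using \<open>odd q\<close> by (rule oddE)
    with that show ?thesis unfolding star_lines_iff by (intro exI[of _ m]) auto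
  qed
  ultimately show "det3 (star_point p) (star_point q) (star_point r) \<noteq> 0"
    by (intro star_point_generic_sorted) auto
qed (use assms in auto)

lemma star_point_on_line:
  "star_point (2 * m + 1) = 0 *s star_centre + 1 *s star_direction m"
  "star_point (2 * m + 2) = 1 *s star_centre + 1 *s star_direction m"
  by (simp_all add: star_point_def)

lemma star_point_Suc_generic:
  assumes "p < 6" "q < 6" "r < 6" "distinct [p, q, r]"
  shows "det3 (star_point (Suc p)) (star_point (Suc q)) (star_point (Suc r)) \<noteq> 0"
  using assms by (intro star_point_generic) (auto simp: star_lines_def)

(* If point q \<noteq> 0 is x q *s c + y q *s h m, with m the line of q, then c and h m move linearly to
   the centre and the m-th direction and (x q, y q) to (0, 1) or (1, 1); the points of a line stay
   in a plane through c at all times. *)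
definition star_deformation ::
    "complex^3 \<Rightarrow> (nat \<Rightarrow> complex^3) \<Rightarrow> (nat \<Rightarrow> complex) \<Rightarrow> (nat \<Rightarrow> complex) \<Rightarrow> complex \<Rightarrow> nat \<Rightarrow> complex^3"
  where
  "star_deformation c h x y t q =
    (if q = 0 then (1 - t) *s c + t *s star_centre
     else ((1 - t) * x q + t * of_bool (even q)) *s ((1 - t) *s c + t *s star_centre) +
       ((1 - t) * y q + t) *s ((1 - t) *s h ((q - 1) div 2) + t *s star_direction ((q - 1) div 2)))"

lemma poly_curve_star_deformation: "poly_curve (star_deformation c h x y)"
  unfolding poly_curve_def
proof
  fix q
  note intros = poly_vec_function_add poly_vec_function_scale poly_vec_function_const
    poly_function_add poly_function_mult poly_function_diff poly_function_const poly_function_ident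
  show "poly_vec_function (\<lambda>t. star_deformation c h x y t q)"
  proof (cases "q = 0")
    case True
    then show ?thesis unfolding star_deformation_def if_P[OF True] by (intro intros)
  next
    case False
    then show ?thesis unfolding star_deformation_def if_not_P[OF False] by (intro intros)
  qed
qed

lemma star_deformation_0:
  "star_deformation c h x y 0 0 = c"
  "q \<noteq> 0 \<Longrightarrow> star_deformation c h x y 0 q = x q *s c + y q *s h ((q - 1) div 2)"
  by (simp_all add: star_deformation_def)

lemma star_deformation_1: "star_deformation c h x y 1 = star_point"
  by (simp add: fun_eq_iff star_deformation_def star_point_def)

lemma star_deformation_collinear:
  "det3 (star_deformation c h x y t 0) (star_deformation c h x y t (2 * m + 1))
     (star_deformation c h x y t (2 * m + 2)) = 0"
    (is "det3 (?G 0) (?G (2 * m + 1)) (?G (2 * m + 2)) = 0")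
proof -
  define C where "C = (1 - t) *s c + t *s star_centre"
  define H where "H = (1 - t) *s h m + t *s star_direction m"
  have "?G 0 = C"
    "?G (2 * m + 1) = ((1 - t) * x (2 * m + 1)) *s C + ((1 - t) * y (2 * m + 1) + t) *s H"
    "?G (2 * m + 2) = ((1 - t) * x (2 * m + 2) + t) *s C + ((1 - t) * y (2 * m + 2) + t) *s H"
    unfolding C_def H_def star_deformation_def by simp_all
  then show ?thesis by (simp only: det3_span2)
qed

section \<open>Line configurations with loops\<close>

definition lines_avoiding :: "nat set set \<Rightarrow> nat set \<Rightarrow> nat set set" where
  "lines_avoiding Lines L = {l \<in> Lines. l \<inter> L = {}}"

lemma lines_avoiding_insert:
  "lines_avoiding Lines (insert k L) = {l \<in> lines_avoiding Lines L. k \<notin> l}"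
  unfolding lines_avoiding_def by auto

lemma exists_triple_extension:
  assumes N: "finite N" and LL: "finite LL" "card LL + 3 \<le> card N"
    and S: "S \<subseteq> N" "S \<noteq> {}" "card S \<le> 3" "S \<notin> LL"
  shows "\<exists>T. S \<subseteq> T \<and> T \<subseteq> N \<and> card T = 3 \<and> T \<notin> LL"
proof -
  have pair: "\<exists>T. {a, b} \<subseteq> T \<and> T \<subseteq> N \<and> card T = 3 \<and> T \<notin> LL"
    if ab: "a \<in> N" "b \<in> N" "a \<noteq> b" for a b
  proof -
    have "inj_on (\<lambda>c. {a, b, c}) (N - {a, b})"
      unfolding inj_on_def by blast
    moreover have "card (N - {a, b}) = card N - 2"
      using ab N by (simp add: card_Diff_subset)
    then have "card LL < card (N - {a, b})"
      using LL(2) by linarith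
    ultimately have "\<not> (\<lambda>c. {a, b, c}) ` (N - {a, b}) \<subseteq> LL"
      using LL(1) by (meson card_inj_on_le leD)
    then obtain c where "c \<in> N - {a, b}" "{a, b, c} \<notin> LL" by blast
    with ab show ?thesis by (intro exI[of _ "{a, b, c}"]) auto
  qed
  have "finite S" using N S(1) finite_subset by blast
  with S(2) have "0 < card S" by (simp add: card_gt_0_iff)
  with S(3) consider "card S = 1" | "card S = 2" | "card S = 3"
    by linarith
  then show ?thesis
  proof cases
    case 1
    then obtain a where a: "S = {a}" by (rule card_1_singletonE)
    have "\<not> N \<subseteq> {a}" using LL(2) card_mono[of "{a}" N] by auto
    then obtain b where "b \<in> N" "b \<noteq> a" by blast
    with pair[of a b] a S(1) show ?thesis by blast
  next
    case 2
    then obtain a b where "S = {a, b}" "a \<noteq> b" by (auto simp: card_2_iff)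
    with pair[of a b] S(1) show ?thesis by blast
  next
    case 3
    with S show ?thesis by blast
  qed
qed

definition relabel :: "nat list \<Rightarrow> (nat \<Rightarrow> complex^3) \<Rightarrow> nat \<Rightarrow> complex^3" where
  "relabel ps W n = (if n \<in> set ps then W (the_inv_into {..<length ps} ((!) ps) n) else 0)"

lemma relabel_nth: "distinct ps \<Longrightarrow> q < length ps \<Longrightarrow> relabel ps W (ps ! q) = W q"
  unfolding relabel_def by (simp add: the_inv_into_f_f inj_on_nth)

lemma relabel_notin: "n \<notin> set ps \<Longrightarrow> relabel ps W n = 0"
  unfolding relabel_def by simp

lemma poly_curve_relabel:
  assumes "poly_curve G"
  shows "poly_curve (\<lambda>t. relabel ps (G t))"
  unfolding poly_curve_def
proof
  fix n
  show "poly_vec_function (\<lambda>t. relabel ps (G t) n)"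
    using assms unfolding poly_curve_def
    by (cases "n \<in> set ps") (simp_all add: relabel_def poly_vec_function_const)
qed

lemma realization_imp_V_circuit: "\<gamma> \<in> realizations d K \<Longrightarrow> \<gamma> \<in> V_circuit d K"
  unfolding realizations_def V_circuit_def by blast

locale line_configuration =
  fixes d :: nat and Lines :: "nat set set"
  assumes line_subset: "l \<in> Lines \<Longrightarrow> l \<subseteq> {1..d}"
    and card_line: "l \<in> Lines \<Longrightarrow> card l = 3"
begin

abbreviation with_loops :: "nat set \<Rightarrow> circuits" where
  "with_loops L \<equiv> make_loops (line_circuits d Lines) L"

lemma finite_lines_avoiding: "finite (lines_avoiding Lines L)"
proof -
  have "lines_avoiding Lines L \<subseteq> Pow {1..d}"
    using line_subset unfolding lines_avoiding_def by auto
  then show ?thesis using finite_subset by blast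
qed

lemma line_in_line_circuits: "l \<in> Lines \<Longrightarrow> l \<in> line_circuits d Lines"
  using line_subset unfolding line_circuits_def by auto

lemma dependent_with_loops_iff:
  assumes "S \<subseteq> {1..d}"
  shows "dependent_in (with_loops L) S \<longleftrightarrow>
    S \<inter> L \<noteq> {} \<or> (\<exists>l\<in>lines_avoiding Lines L. l \<subseteq> S) \<or> 4 \<le> card S"
proof
  assume "dependent_in (with_loops L) S"
  then obtain c where c: "c \<subseteq> S" "(c \<in> Lines \<or> card c = 4) \<and> c \<inter> L = {} \<or> (\<exists>s\<in>L. c = {s})"
    unfolding dependent_in_def make_loops_def line_circuits_def by auto
  from c(2) consider s where "s \<in> L" "c = {s}" | "c \<in> Lines" "c \<inter> L = {}" | "card c = 4"
    by blast
  then show "S \<inter> L \<noteq> {} \<or> (\<exists>l\<in>lines_avoiding Lines L. l \<subseteq> S) \<or> 4 \<le> card S"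
  proof cases
    case 1
    then show ?thesis using c(1) by auto
  next
    case 2
    then show ?thesis using c(1) unfolding lines_avoiding_def by blast
  next
    case 3
    have "finite S" using assms finite_subset by blast
    then show ?thesis using card_mono[OF _ c(1)] 3 by simp
  qed
next
  assume "S \<inter> L \<noteq> {} \<or> (\<exists>l\<in>lines_avoiding Lines L. l \<subseteq> S) \<or> 4 \<le> card S"
  then consider "S \<inter> L \<noteq> {}" | l where "l \<in> lines_avoiding Lines L" "l \<subseteq> S"
    | "S \<inter> L = {}" "4 \<le> card S"
    by blast
  then show "dependent_in (with_loops L) S"
  proof cases
    case 1
    then obtain s where "s \<in> S" "s \<in> L" by blast
    then have "{s} \<in> with_loops L" "{s} \<subseteq> S" unfolding make_loops_def by blast+
    then show ?thesis unfolding dependent_in_def by blast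
  next
    case 2
    then have "l \<in> with_loops L"
      using line_in_line_circuits unfolding make_loops_def lines_avoiding_def by blast
    with 2 show ?thesis unfolding dependent_in_def by blast
  next
    case 3
    obtain T where T: "T \<subseteq> S" "card T = 4"
      using 3(2) obtain_subset_with_card_n by metis
    then have TL: "T \<inter> L = {}" using 3(1) by blast
    show ?thesis
    proof (cases "\<exists>l\<in>Lines. l \<subseteq> T")
      case True
      then obtain l where "l \<in> Lines" "l \<subseteq> T" by blast
      then have "l \<in> with_loops L" "l \<subseteq> S"
        using line_in_line_circuits TL T(1) unfolding make_loops_def by blast+
      then show ?thesis unfolding dependent_in_def by blast
    next
      case False
      then have "T \<in> with_loops L"
        using T TL assms unfolding make_loops_def line_circuits_def by blast
      with T(1) show ?thesis unfolding dependent_in_def by blast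
    qed
  qed
qed

lemma V_circuit_with_loops_iff:
  assumes "L \<subseteq> {1..d}"
  shows "\<gamma> \<in> V_circuit d (with_loops L) \<longleftrightarrow>
    \<gamma> \<in> cfg_space d \<and> (\<forall>s\<in>L. \<gamma> s = 0) \<and> (\<forall>l\<in>lines_avoiding Lines L. lin_dep_family \<gamma> l)"
proof
  assume \<gamma>: "\<gamma> \<in> V_circuit d (with_loops L)"
  then have dep: "lin_dep_family \<gamma> S" if "S \<subseteq> {1..d}" "dependent_in (with_loops L) S" for S
    using that unfolding V_circuit_def by blast
  have "\<gamma> s = 0" if s: "s \<in> L" for s
  proof -
    have "{s} \<subseteq> {1..d}" using s assms by blast
    with s have "lin_dep_family \<gamma> {s}" by (intro dep) (simp_all add: dependent_with_loops_iff)
    then show ?thesis by (simp add: lin_dep_family_singleton)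
  qed
  moreover have "lin_dep_family \<gamma> l" if l: "l \<in> lines_avoiding Lines L" for l
  proof -
    have "l \<subseteq> {1..d}" using l line_subset unfolding lines_avoiding_def by blast
    with l show ?thesis by (intro dep) (auto simp: dependent_with_loops_iff)
  qed
  moreover have "\<gamma> \<in> cfg_space d" using \<gamma> unfolding V_circuit_def by blast
  ultimately show "\<gamma> \<in> cfg_space d \<and> (\<forall>s\<in>L. \<gamma> s = 0) \<and>
      (\<forall>l\<in>lines_avoiding Lines L. lin_dep_family \<gamma> l)"
    by blast
next
  assume \<gamma>: "\<gamma> \<in> cfg_space d \<and> (\<forall>s\<in>L. \<gamma> s = 0) \<and> (\<forall>l\<in>lines_avoiding Lines L. lin_dep_family \<gamma> l)"
  have "lin_dep_family \<gamma> S" if S: "S \<subseteq> {1..d}" "dependent_in (with_loops L) S" for S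
  proof -
    have "finite S" using S(1) finite_subset by blast
    from S(2) consider s where "s \<in> S" "s \<in> L" | l where "l \<in> lines_avoiding Lines L" "l \<subseteq> S"
      | "4 \<le> card S"
      unfolding dependent_with_loops_iff[OF S(1)] by blast
    then show ?thesis
    proof cases
      case 1
      then show ?thesis using \<gamma> \<open>finite S\<close> lin_dep_family_if_zero by metis
    next
      case 2
      then show ?thesis using \<gamma> \<open>finite S\<close> lin_dep_family_mono by metis
    next
      case 3
      then show ?thesis using \<open>finite S\<close> lin_dep_family_card_ge_4 by blast
    qed
  qed
  with \<gamma> show "\<gamma> \<in> V_circuit d (with_loops L)" unfolding V_circuit_def by blast
qed

lemma V_circuit_with_loops_antimono:
  assumes "L \<subseteq> L'" "L' \<subseteq> {1..d}"
  shows "V_circuit d (with_loops L') \<subseteq> V_circuit d (with_loops L)"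
proof
  fix \<gamma> assume "\<gamma> \<in> V_circuit d (with_loops L')"
  then have \<gamma>: "\<gamma> \<in> cfg_space d" "\<forall>s\<in>L'. \<gamma> s = 0" "\<forall>l\<in>lines_avoiding Lines L'. lin_dep_family \<gamma> l"
    unfolding V_circuit_with_loops_iff[OF assms(2)] by auto
  have "lin_dep_family \<gamma> l" if l: "l \<in> lines_avoiding Lines L" for l
  proof (cases "l \<inter> L' = {}")
    case True
    then have "l \<in> lines_avoiding Lines L'" using l by (simp add: lines_avoiding_def)
    with \<gamma>(3) show ?thesis by simp
  next
    case False
    then obtain s where "s \<in> l" "s \<in> L'" by blast
    moreover have "finite l"
      using l card_line card.infinite unfolding lines_avoiding_def by fastforce
    ultimately show ?thesis using \<gamma>(2) lin_dep_family_if_zero by metis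
  qed
  with \<gamma> assms show "\<gamma> \<in> V_circuit d (with_loops L)"
    unfolding V_circuit_with_loops_iff[OF order_trans[OF assms]] by auto
qed

lemma V_matroid_subset_V_circuit:
  assumes "L \<subseteq> {1..d}"
  shows "V_matroid d (with_loops L) \<subseteq> V_circuit d (with_loops L)"
proof
  fix \<gamma> assume \<gamma>: "\<gamma> \<in> V_matroid d (with_loops L)"
  have vanish: "p \<gamma> = 0" if p: "p \<in> poly_funs" "\<And>\<rho>. \<rho> \<in> V_circuit d (with_loops L) \<Longrightarrow> p \<rho> = 0" for p
  proof -
    have "\<forall>\<rho>\<in>realizations d (with_loops L). p \<rho> = 0"
      using p(2) realization_imp_V_circuit by blast
    moreover have "\<forall>p\<in>poly_funs. (\<forall>\<rho>\<in>realizations d (with_loops L). p \<rho> = 0) \<longrightarrow> p \<gamma> = 0"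
      using \<gamma> unfolding V_matroid_def zariski_closure_def by simp
    ultimately show ?thesis using p(1) by blast
  qed
  have "\<gamma> s = 0" if s: "s \<in> L" for s
  proof -
    have "\<gamma> s $ r = 0" for r
      by (rule vanish[OF poly_funs.coord]) (use s in \<open>simp add: V_circuit_with_loops_iff[OF assms]\<close>)
    then show ?thesis by (simp add: vec_eq_iff)
  qed
  moreover have "lin_dep_family \<gamma> l" if l: "l \<in> lines_avoiding Lines L" for l
  proof -
    have "card l = 3" using l card_line unfolding lines_avoiding_def by blast
    then obtain a b c where abc: "l = {a, b, c}" "a \<noteq> b" "a \<noteq> c" "b \<noteq> c"
      unfolding card_3_iff by blast
    note dep_iff = lin_dep_family_triple_iff[OF abc(2-4)]
    have "det3 (\<gamma> a) (\<gamma> b) (\<gamma> c) = 0"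
      by (rule vanish[OF poly_funs_det3])
        (use l abc(1) in \<open>simp add: V_circuit_with_loops_iff[OF assms] flip: dep_iff\<close>)
    then show ?thesis by (simp add: abc(1) dep_iff)
  qed
  moreover have "\<gamma> \<in> cfg_space d" using \<gamma> unfolding V_matroid_def zariski_closure_def by blast
  ultimately show "\<gamma> \<in> V_circuit d (with_loops L)" by (simp add: V_circuit_with_loops_iff[OF assms])
qed

definition off_line_triples_independent :: "nat set \<Rightarrow> (nat \<Rightarrow> complex^3) \<Rightarrow> bool" where
  "off_line_triples_independent L \<gamma> \<longleftrightarrow>
    (\<forall>a\<in>{1..d} - L. \<forall>b\<in>{1..d} - L. \<forall>c\<in>{1..d} - L.
      distinct [a, b, c] \<longrightarrow> {a, b, c} \<notin> lines_avoiding Lines L \<longrightarrow> det3 (\<gamma> a) (\<gamma> b) (\<gamma> c) \<noteq> 0)"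

lemma realization_imp_off_line_triples_independent:
  assumes \<gamma>: "\<gamma> \<in> realizations d (with_loops L)"
  shows "off_line_triples_independent L \<gamma>"
  unfolding off_line_triples_independent_def
proof (intro ballI impI)
  fix a b c assume abc: "a \<in> {1..d} - L" "b \<in> {1..d} - L" "c \<in> {1..d} - L"
    and dist: "distinct [a, b, c]" and nl: "{a, b, c} \<notin> lines_avoiding Lines L"
  have S: "{a, b, c} \<subseteq> {1..d}" using abc by blast
  have "\<not> dependent_in (with_loops L) {a, b, c}"
  proof
    assume "dependent_in (with_loops L) {a, b, c}"
    then consider l where "l \<in> lines_avoiding Lines L" "l \<subseteq> {a, b, c}" | "4 \<le> card {a, b, c}"
      using abc unfolding dependent_with_loops_iff[OF S] by blast
    then show False
    proof cases
      case 1
      have "card l = 3" using 1(1) card_line unfolding lines_avoiding_def by blast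
      then have "l = {a, b, c}" using 1(2) dist by (intro card_subset_eq) auto
      with 1(1) nl show False by simp
    next
      case 2
      then show False using dist by simp
    qed
  qed
  with \<gamma> S have "\<not> lin_dep_family \<gamma> {a, b, c}" unfolding realizations_def by blast
  with dist show "det3 (\<gamma> a) (\<gamma> b) (\<gamma> c) \<noteq> 0" by (simp add: lin_dep_family_triple_iff)
qed

lemma realization_if_off_line_triples_independent:
  assumes L: "card (lines_avoiding Lines L) + 3 \<le> card ({1..d} - L)"
    and \<gamma>: "\<gamma> \<in> V_circuit d (with_loops L)" "off_line_triples_independent L \<gamma>"
  shows "\<gamma> \<in> realizations d (with_loops L)"
  unfolding realizations_def
proof (intro CollectI conjI allI impI)
  show "\<gamma> \<in> cfg_space d" using \<gamma>(1) unfolding V_circuit_def by blast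
  fix S assume S: "S \<subseteq> {1..d}"
  show "lin_dep_family \<gamma> S \<longleftrightarrow> dependent_in (with_loops L) S"
  proof
    assume dep: "lin_dep_family \<gamma> S"
    show "dependent_in (with_loops L) S"
    proof (rule ccontr)
      assume nd: "\<not> dependent_in (with_loops L) S"
      then have SL: "S \<subseteq> {1..d} - L" "S \<notin> lines_avoiding Lines L" "card S \<le> 3"
        using S unfolding dependent_with_loops_iff[OF S] by auto
      have "S \<noteq> {}" using dep unfolding lin_dep_family_def by blast
      then obtain T where T: "S \<subseteq> T" "T \<subseteq> {1..d} - L" "card T = 3" "T \<notin> lines_avoiding Lines L"
        using exists_triple_extension[OF _ finite_lines_avoiding L SL(1) _ SL(3) SL(2)] by blast
      then obtain a b c where abc: "T = {a, b, c}" "distinct [a, b, c]"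
        unfolding card_3_iff by auto
      have "det3 (\<gamma> a) (\<gamma> b) (\<gamma> c) \<noteq> 0"
        using \<gamma>(2) T(2,4) abc unfolding off_line_triples_independent_def by auto
      moreover have "lin_dep_family \<gamma> T"
        using lin_dep_family_mono[OF dep T(1)] abc(1) by simp
      ultimately show False using abc by (simp add: lin_dep_family_triple_iff)
    qed
  next
    assume "dependent_in (with_loops L) S"
    with \<gamma>(1) S show "lin_dep_family \<gamma> S" unfolding V_circuit_def by blast
  qed
qed

lemma V_matroid_by_curve:
  assumes L: "card (lines_avoiding Lines L) + 3 \<le> card ({1..d} - L)"
    and g: "poly_curve g" "\<And>t. g t \<in> V_circuit d (with_loops L)"
      "g 1 \<in> realizations d (with_loops L)"
  shows "g 0 \<in> V_matroid d (with_loops L)"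
  unfolding V_matroid_def
proof (rule zariski_closure_by_curve[OF g(1)])
  show "g 0 \<in> cfg_space d" using g(2) unfolding V_circuit_def by blast
  define N where "N = {1..d} - L"
  have "\<forall>\<^sub>F t in cofinite. distinct [a, b, c] \<longrightarrow> {a, b, c} \<notin> lines_avoiding Lines L \<longrightarrow>
      det3 (g t a) (g t b) (g t c) \<noteq> 0"
    if "a \<in> N" "b \<in> N" "c \<in> N" for a b c
  proof (cases "distinct [a, b, c] \<and> {a, b, c} \<notin> lines_avoiding Lines L")
    case True
    have "det3 (g 1 a) (g 1 b) (g 1 c) \<noteq> 0"
      using realization_imp_off_line_triples_independent[OF g(3)] that True
      unfolding off_line_triples_independent_def N_def by blast
    then have "\<forall>\<^sub>F t in cofinite. det3 (g t a) (g t b) (g t c) \<noteq> 0"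
      by (intro poly_function_eventually_nonzero
          poly_function_along_poly_curve[OF poly_funs_det3 g(1)])
    then show ?thesis by (rule eventually_mono) blast
  qed auto
  then have "\<forall>\<^sub>F t in cofinite. off_line_triples_independent L (g t)"
    unfolding off_line_triples_independent_def N_def[symmetric]
    by (intro eventually_ball_finite ballI) (auto simp: N_def)
  then show "\<forall>\<^sub>F t in cofinite. g t \<in> realizations d (with_loops L)"
    by (rule eventually_mono) (rule realization_if_off_line_triples_independent[OF L g(2)])
qed

lemma realization_relabel:
  assumes L: "card (lines_avoiding Lines L) + 3 \<le> card ({1..d} - L)"
    and ps: "distinct ps" "set ps = {1..d} - L"
    and lines: "lines_avoiding Lines L = (`) ((!) ps) ` RL"
    and W: "\<And>p q r. p < length ps \<Longrightarrow> q < length ps \<Longrightarrow> r < length ps \<Longrightarrow> distinct [p, q, r] \<Longrightarrow>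
      {p, q, r} \<notin> RL \<Longrightarrow> det3 (W p) (W q) (W r) \<noteq> 0"
    and V: "relabel ps W \<in> V_circuit d (with_loops L)"
  shows "relabel ps W \<in> realizations d (with_loops L)"
proof (rule realization_if_off_line_triples_independent[OF L V])
  show "off_line_triples_independent L (relabel ps W)"
    unfolding off_line_triples_independent_def
  proof (intro ballI impI)
    fix a b c assume abc: "a \<in> {1..d} - L" "b \<in> {1..d} - L" "c \<in> {1..d} - L"
      and dist: "distinct [a, b, c]" and nl: "{a, b, c} \<notin> lines_avoiding Lines L"
    obtain p q r where pqr: "p < length ps" "q < length ps" "r < length ps"
      "a = ps ! p" "b = ps ! q" "c = ps ! r"
      using abc unfolding ps(2)[symmetric] in_set_conv_nth by metis
    have "{a, b, c} = (!) ps ` {p, q, r}" using pqr(4-6) by simp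
    then have "{p, q, r} \<notin> RL" using nl unfolding lines by (metis rev_image_eqI)
    moreover have "distinct [p, q, r]" using dist pqr(4-6) by auto
    ultimately show "det3 (relabel ps W a) (relabel ps W b) (relabel ps W c) \<noteq> 0"
      using W pqr by (simp add: relabel_nth ps(1))
  qed
qed

lemma V_circuit_subset_V_matroid_if_no_lines:
  assumes L: "L \<subseteq> {1..d}" "lines_avoiding Lines L = {}" "3 \<le> card ({1..d} - L)"
    and \<rho>: "\<rho> \<in> realizations d (with_loops L)"
  shows "V_circuit d (with_loops L) \<subseteq> V_matroid d (with_loops L)"
proof
  fix \<gamma> assume \<gamma>: "\<gamma> \<in> V_circuit d (with_loops L)"
  define g where "g t n = (1 - t) *s \<gamma> n + t *s \<rho> n" for t n
  have "\<rho> \<in> V_circuit d (with_loops L)" using \<rho> by (rule realization_imp_V_circuit)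
  with \<gamma> have "g t \<in> V_circuit d (with_loops L)" for t
    unfolding V_circuit_with_loops_iff[OF L(1)] L(2) by (simp add: g_def cfg_space_def)
  moreover have "poly_curve g"
    unfolding poly_curve_def g_def
    by (intro allI poly_vec_function_add poly_vec_function_scale poly_vec_function_const
        poly_function_diff poly_function_const poly_function_ident)
  moreover have "g 1 = \<rho>" "g 0 = \<gamma>" by (simp_all add: g_def fun_eq_iff)
  ultimately show "\<gamma> \<in> V_matroid d (with_loops L)"
    using V_matroid_by_curve[of L g] L(2,3) \<rho> by simp
qed

definition star_configuration :: "nat set \<Rightarrow> nat list \<Rightarrow> bool" where
  "star_configuration L ps \<longleftrightarrow> L \<subseteq> {1..d} \<and> distinct ps \<and> set ps = {1..d} - L \<and> length ps = 7 \<and>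
     lines_avoiding Lines L = (`) ((!) ps) ` star_lines"

lemma relabel_in_V_circuit_star:
  assumes star: "star_configuration L ps"
    and F: "\<And>m. m < 3 \<Longrightarrow> det3 (F 0) (F (2 * m + 1)) (F (2 * m + 2)) = 0"
  shows "relabel ps F \<in> V_circuit d (with_loops L)"
proof -
  have L: "L \<subseteq> {1..d}" and ps: "distinct ps" "set ps = {1..d} - L" "length ps = 7"
    and lines: "lines_avoiding Lines L = (`) ((!) ps) ` star_lines"
    using star unfolding star_configuration_def by auto
  have "lin_dep_family (relabel ps F) l" if l: "l \<in> lines_avoiding Lines L" for l
  proof -
    obtain R where "R \<in> star_lines" "l = (!) ps ` R" using l unfolding lines by blast
    then obtain m where "m < 3" "l = (!) ps ` {0, 2 * m + 1, 2 * m + 2}"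
      unfolding star_lines_iff by blast
    then have m: "m < 3" "l = {ps ! 0, ps ! (2 * m + 1), ps ! (2 * m + 2)}" by simp_all
    have "distinct [ps ! 0, ps ! (2 * m + 1), ps ! (2 * m + 2)]"
      using m(1) ps(1,3) by (auto simp: nth_eq_iff_index_eq)
    with m F show ?thesis
      using ps(1,3) by (simp add: lin_dep_family_triple_iff relabel_nth)
  qed
  moreover have "relabel ps F n = 0" if "n \<notin> {1..d} - L" for n
    using that ps(2) by (simp add: relabel_notin)
  ultimately show ?thesis
    unfolding V_circuit_with_loops_iff[OF L] cfg_space_def by auto
qed

lemma star_configurationI:
  assumes "L \<subseteq> {1..d}" "distinct ps" "set ps = {1..d} - L" "length ps = 7"
    "lines_avoiding Lines L =
      {{ps ! 0, ps ! 1, ps ! 2}, {ps ! 0, ps ! 3, ps ! 4}, {ps ! 0, ps ! 5, ps ! 6}}"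
  shows "star_configuration L ps"
  using assms unfolding star_configuration_def star_lines_def by simp

lemma star_configuration_card:
  assumes "star_configuration L ps"
  shows "card (lines_avoiding Lines L) + 3 \<le> card ({1..d} - L)"
proof -
  have ps: "distinct ps" "set ps = {1..d} - L" "length ps = 7"
    and lines: "lines_avoiding Lines L = (`) ((!) ps) ` star_lines"
    using assms unfolding star_configuration_def by auto
  have "card (lines_avoiding Lines L) \<le> card star_lines"
    unfolding lines by (rule card_image_le) (simp add: star_lines_def)
  also have "\<dots> \<le> 3"
    using card_length[of "[{0, 1, 2}, {0, 3, 4}, {0, 5, 6::nat}]"] by (simp add: star_lines_def)
  moreover have "card ({1..d} - L) = 7" using distinct_card[OF ps(1)] ps(2,3) by simp
  ultimately show ?thesis by simp
qed

lemma star_realization: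
  assumes star: "star_configuration L ps"
  shows "relabel ps star_point \<in> realizations d (with_loops L)"
proof -
  have ps: "distinct ps" "set ps = {1..d} - L" "length ps = 7"
    and lines: "lines_avoiding Lines L = (`) ((!) ps) ` star_lines"
    using star unfolding star_configuration_def by auto
  note card = star_configuration_card[OF star]
  have "star_point 0 = star_centre" by (simp add: star_point_def)
  then have "relabel ps star_point \<in> V_circuit d (with_loops L)"
    by (intro relabel_in_V_circuit_star[OF star]) (simp only: star_point_on_line det3_span2)
  with ps show ?thesis
    by (intro realization_relabel[OF card ps(1,2) lines]) (simp_all add: star_point_generic)
qed

lemma punctured_star_configuration:
  assumes "star_configuration L ps"
  shows "insert (ps ! 0) L \<subseteq> {1..d}" "distinct (tl ps)" "set (tl ps) = {1..d} - insert (ps ! 0) L"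
    "length (tl ps) = 6" "lines_avoiding Lines (insert (ps ! 0) L) = {}"
proof -
  have L: "L \<subseteq> {1..d}" and ps: "distinct ps" "set ps = {1..d} - L" "length ps = 7"
    and lines: "lines_avoiding Lines L = (`) ((!) ps) ` star_lines"
    using assms unfolding star_configuration_def by auto
  obtain k qs where ps_eq: "ps = k # qs" using ps(3) by (cases ps) auto
  show "insert (ps ! 0) L \<subseteq> {1..d}" "distinct (tl ps)" "set (tl ps) = {1..d} - insert (ps ! 0) L"
    "length (tl ps) = 6"
    using L ps unfolding ps_eq by auto
  show "lines_avoiding Lines (insert (ps ! 0) L) = {}"
    unfolding lines_avoiding_insert lines star_lines_def by auto
qed

lemma punctured_star_realization:
  assumes star: "star_configuration L ps"
  shows "relabel (tl ps) (star_point \<circ> Suc) \<in> realizations d (with_loops (insert (ps ! 0) L))"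
proof -
  note punctured = punctured_star_configuration[OF star]
  have "card ({1..d} - insert (ps ! 0) L) = 6"
    using distinct_card[OF punctured(2)] punctured(3,4) by simp
  then have card:
    "card (lines_avoiding Lines (insert (ps ! 0) L)) + 3 \<le> card ({1..d} - insert (ps ! 0) L)"
    using punctured(5) by simp
  have "relabel (tl ps) (star_point \<circ> Suc) n = 0" if "n \<notin> {1..d} - insert (ps ! 0) L" for n
    using that punctured(3) by (simp add: relabel_notin)
  then have "relabel (tl ps) (star_point \<circ> Suc) \<in> V_circuit d (with_loops (insert (ps ! 0) L))"
    unfolding V_circuit_with_loops_iff[OF punctured(1)] punctured(5) cfg_space_def by auto
  then show ?thesis
    using punctured(4)
    by (intro realization_relabel[OF card punctured(2,3), of "{}"])
      (auto simp: punctured(5) star_point_Suc_generic)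
qed

lemma star_line_frames:
  assumes star: "star_configuration L ps"
    and \<gamma>: "\<gamma> \<in> V_circuit d (with_loops L)" "\<gamma> (ps ! 0) \<noteq> 0"
  obtains h x y where
    "\<And>q. q \<in> {1..6} \<Longrightarrow> \<gamma> (ps ! q) = x q *s \<gamma> (ps ! 0) + y q *s h ((q - 1) div 2)"
proof -
  have L: "L \<subseteq> {1..d}" and ps: "distinct ps" "length ps = 7"
    and lines: "lines_avoiding Lines L = (`) ((!) ps) ` star_lines"
    using star unfolding star_configuration_def by auto
  have "\<exists>h. \<forall>q\<in>{2 * m + 1, 2 * m + 2}. \<exists>x y. \<gamma> (ps ! q) = x *s \<gamma> (ps ! 0) + y *s h"
    if m: "m < 3" for m
  proof -
    have "{ps ! 0, ps ! (2 * m + 1), ps ! (2 * m + 2)} \<in> lines_avoiding Lines L"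
      unfolding lines using m
      by (intro image_eqI[of _ _ "{0, 2 * m + 1, 2 * m + 2}"]) (auto simp: star_lines_iff)
    then have "lin_dep_family \<gamma> {ps ! 0, ps ! (2 * m + 1), ps ! (2 * m + 2)}"
      using \<gamma>(1) unfolding V_circuit_with_loops_iff[OF L] by blast
    moreover have "distinct [ps ! 0, ps ! (2 * m + 1), ps ! (2 * m + 2)]"
      using m ps by (auto simp: nth_eq_iff_index_eq)
    ultimately have "det3 (\<gamma> (ps ! 0)) (\<gamma> (ps ! (2 * m + 1))) (\<gamma> (ps ! (2 * m + 2))) = 0"
      by (simp add: lin_dep_family_triple_iff)
    with \<gamma>(2) show ?thesis by (auto dest!: det3_eq_0_imp_span2)
  qed
  then obtain h where h: "\<And>m q. m < 3 \<Longrightarrow> q \<in> {2 * m + 1, 2 * m + 2} \<Longrightarrow>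
      \<exists>x y. \<gamma> (ps ! q) = x *s \<gamma> (ps ! 0) + y *s h m"
    by metis
  have "\<exists>x y. \<gamma> (ps ! q) = x *s \<gamma> (ps ! 0) + y *s h ((q - 1) div 2)" if "q \<in> {1..6}" for q
    using that by (intro h) auto
  then show ?thesis using that by metis
qed

lemma V_matroid_star_centre_nonzero:
  assumes star: "star_configuration L ps"
    and \<gamma>: "\<gamma> \<in> V_circuit d (with_loops L)" "\<gamma> (ps ! 0) \<noteq> 0"
  shows "\<gamma> \<in> V_matroid d (with_loops L)"
proof -
  have L: "L \<subseteq> {1..d}" and ps: "distinct ps" "set ps = {1..d} - L" "length ps = 7"
    using star unfolding star_configuration_def by auto
  obtain h x y where xy:
    "\<And>q. q \<in> {1..6} \<Longrightarrow> \<gamma> (ps ! q) = x q *s \<gamma> (ps ! 0) + y q *s h ((q - 1) div 2)"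
    using star_line_frames[OF star \<gamma>] by blast
  define g where "g = (\<lambda>t. relabel ps (star_deformation (\<gamma> (ps ! 0)) h x y t))"
  have "g 0 = \<gamma>"
  proof
    fix n
    show "g 0 n = \<gamma> n"
    proof (cases "n \<in> set ps")
      case True
      then obtain q where "q < 7" "n = ps ! q" using ps(3) by (metis in_set_conv_nth)
      then show ?thesis
        using xy[of q] ps(1,3)
        by (cases "q = 0") (simp_all add: g_def relabel_nth star_deformation_0)
    next
      case False
      then have "\<gamma> n = 0"
        using \<gamma>(1) ps(2) unfolding V_circuit_with_loops_iff[OF L] cfg_space_def by auto
      with False show ?thesis by (simp add: g_def relabel_notin)
    qed
  qed
  moreover have "g t \<in> V_circuit d (with_loops L)" for t
    unfolding g_def by (intro relabel_in_V_circuit_star[OF star] star_deformation_collinear)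
  moreover have "poly_curve g"
    unfolding g_def by (rule poly_curve_relabel[OF poly_curve_star_deformation])
  moreover have "g 1 \<in> realizations d (with_loops L)"
    using star_realization[OF star] by (simp add: g_def star_deformation_1)
  ultimately show ?thesis
    using V_matroid_by_curve[OF star_configuration_card[OF star], of g] by simp
qed

theorem star_decomposition:
  assumes star: "star_configuration L ps"
  defines "k \<equiv> ps ! 0"
  shows "V_circuit d (with_loops L) =
    V_matroid d (with_loops L) \<union> V_matroid d (with_loops (insert k L))"
    (is "?V = ?W \<union> ?W'")
proof
  have L: "L \<subseteq> {1..d}" using star unfolding star_configuration_def by blast
  note punctured = punctured_star_configuration[OF star, folded k_def]
  show "?W \<union> ?W' \<subseteq> ?V"
    using V_matroid_subset_V_circuit[OF L] V_matroid_subset_V_circuit[OF punctured(1)]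
      V_circuit_with_loops_antimono[OF subset_insertI punctured(1)] by blast
  show "?V \<subseteq> ?W \<union> ?W'"
  proof
    fix \<gamma> assume \<gamma>: "\<gamma> \<in> ?V"
    show "\<gamma> \<in> ?W \<union> ?W'"
    proof (cases "\<gamma> k = 0")
      case True
      with \<gamma> have "\<gamma> \<in> V_circuit d (with_loops (insert k L))"
        unfolding V_circuit_with_loops_iff[OF L] V_circuit_with_loops_iff[OF punctured(1)]
          punctured(5)
        by blast
      moreover have "3 \<le> card ({1..d} - insert k L)"
        using distinct_card[OF punctured(2)] punctured(3,4) by simp
      moreover note punctured_star_realization[OF star, folded k_def]
      ultimately show ?thesis
        using V_circuit_subset_V_matroid_if_no_lines[OF punctured(1,5)] by blast
    next
      case False
      with \<gamma> show ?thesis using V_matroid_star_centre_nonzero[OF star] unfolding k_def by blast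
    qed
  qed
qed

end

section \<open>The Pappus configuration\<close>

interpretation pappus: line_configuration 9 pappus_lines
  by unfold_locales (auto simp: pappus_lines_def)

lemma pappus_lines_avoiding:
  "lines_avoiding pappus_lines L = set (filter (\<lambda>l. l \<inter> L = {})
     [{1,2,3}, {1,6,8}, {7,8,9}, {2,6,9}, {2,4,7}, {3,5,9}, {3,4,8}, {1,5,7}, {4,5,6}])"
  unfolding lines_avoiding_def pappus_lines_def set_filter by simp

lemma pappus_star_configurations:
  "pappus.star_configuration {4, 9} [1, 2, 3, 6, 8, 5, 7]"
  "pappus.star_configuration {1, 9} [4, 2, 7, 3, 8, 5, 6]"
  "pappus.star_configuration {1, 4} [9, 7, 8, 2, 6, 3, 5]"
  "pappus.star_configuration {5, 8} [2, 1, 3, 6, 9, 4, 7]"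
  "pappus.star_configuration {2, 8} [5, 3, 9, 1, 7, 4, 6]"
  "pappus.star_configuration {2, 5} [8, 1, 6, 7, 9, 3, 4]"
  "pappus.star_configuration {6, 7} [3, 1, 2, 5, 9, 4, 8]"
  "pappus.star_configuration {3, 7} [6, 1, 8, 2, 9, 4, 5]"
  "pappus.star_configuration {3, 6} [7, 8, 9, 2, 4, 1, 5]"
  by (intro pappus.star_configurationI; simp add: pappus_lines_avoiding insert_commute; auto)+

lemma pappus_decomposition:
  assumes "T \<in> {{1, 4, 9}, {2, 5, 8}, {3, 6, 7}}" "k \<in> T"
  shows "V_circuit 9 (make_loops M_P (T - {k})) =
    V_matroid 9 (make_loops M_P (T - {k})) \<union> V_matroid 9 (make_loops M_P T)"
proof -
  have decomposition: "V_circuit 9 (make_loops M_P L) =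
      V_matroid 9 (make_loops M_P L) \<union> V_matroid 9 (make_loops M_P (insert k L))"
    if "(L, k) \<in> {({4, 9}, 1), ({1, 9}, 4), ({1, 4}, 9), ({5, 8}, 2), ({2, 8}, 5),
      ({2, 5}, 8), ({6, 7}, 3), ({3, 7}, 6), ({3, 6}, 7)}" for L k
    using that
    by (elim insertE emptyE)
      (simp_all only: prod.inject pappus_star_configurations[THEN pappus.star_decomposition,
        folded M_P_def, unfolded nth_Cons_0])
  from assms have "(T - {k}, k) \<in> {({4, 9}, 1), ({1, 9}, 4), ({1, 4}, 9), ({5, 8}, 2), ({2, 8}, 5),
      ({2, 5}, 8), ({6, 7}, 3), ({3, 7}, 6), ({3, 6}, 7)}"
    by (elim insertE emptyE) (auto simp: insert_Diff_if)
  note decomposition[OF this]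
  moreover have "insert k (T - {k}) = T" using assms(2) by blast
  ultimately show ?thesis by simp
qed

theorem mainTheorem14:
  fixes i j k :: nat
  assumes "i \<in> {1..9}" and "j \<in> {1..9}" and "i \<noteq> j"
    and "\<not> (\<exists>l\<in>pappus_lines. i \<in> l \<and> j \<in> l)"
    and "{i, j, k} \<in> {{1,4,9}, {2,5,8}, {3,6,7}}"
  shows "V_circuit 9 (make_loops M_P {i, j}) =
         V_matroid 9 (make_loops M_P {i, j}) \<union> V_matroid 9 (make_loops M_P {i, j, k})"
proof -
  have "card {i, j, k} = 3" using assms(5) by auto
  then have "k \<notin> {i, j}" by (auto simp: card_insert_if split: if_splits)
  then have "{i, j} = {i, j, k} - {k}" by auto
  then show ?thesis using pappus_decomposition[OF assms(5)] by simp
qed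

end
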